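(* Let $s \geq 0$ be an integer and let $G$ be a bipartite graph with bipartition $A\cup B$, where $A=\{a_1,\dots, a_n\}$ and $B=\{b_1,\dots,b_n\}$, such that: (P1) for all $i,j\in \{1,\dots,n\}$ with $i<j$, $|N_G(a_i)\cap \{b_{i+1},\dots, b_{j}\}| \geq \frac{j-i-s}{2}$; (P2) for all $i,j\in \{1,\dots,n\}$ with $i<j$, $|N_G(b_j)\cap \{a_{i},\dots, a_{j-1}\}| \geq \frac{j-i-s}{2}$. Then $G$ contains a matching of size at least $n-s-1$.
   Context: $N_G(x)$ denotes the set of neighbours of $x$ in the (undirected) graph $G$. *)

theory Defs
  imports Complex_Main
begin

text \<open>Undirected graphs are given by a symmetric irreflexive edge relation E on a vertex type.\<close>

definition nbhd :: "('v \<Rightarrow> 'v \<Rightarrow> bool) \<Rightarrow> 'v \<Rightarrow> 'v set" where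
  "nbhd E x = {y. E x y}"

definition is_matching :: "('v \<Rightarrow> 'v \<Rightarrow> bool) \<Rightarrow> 'v set set \<Rightarrow> bool" where
  "is_matching E M \<longleftrightarrow> finite M \<and> M \<subseteq> {{u, v} | u v. E u v} \<and>
     (\<forall>e\<in>M. \<forall>f\<in>M. e \<noteq> f \<longrightarrow> e \<inter> f = {})"

end

theory Submission imports Defs begin

(* Hall's theorem with deficiency s + 1 reduces the claim to a counting statement. Let X be a set
   of indices on the A-side and Y the indices on the B-side that have no neighbour in a ` X. With
   i = min X and j = max Y, property (P1) at a_i bounds how much of Y lies in (i, j], property (P2)
   at b_j bounds how much of X lies in [i, j), and together |X| + |Y| <= n + s + 1, which is
   exactly Hall's condition with deficiency s + 1. *)

lemma hall_condition_remove_element: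
  assumes surplus: "\<And>X. X \<subseteq> I \<Longrightarrow> X \<noteq> {} \<Longrightarrow> X \<noteq> I \<Longrightarrow> card X < card (\<Union>(S ` X))"
    and "x \<in> I"
  shows "\<forall>X \<subseteq> I - {x}. card X \<le> card (\<Union>z\<in>X. S z - {y})"
proof (intro allI impI)
  fix X assume X: "X \<subseteq> I - {x}"
  show "card X \<le> card (\<Union>z\<in>X. S z - {y})"
  proof (cases "X = {}")
    case False
    with X \<open>x \<in> I\<close> have "card X < card (\<Union>(S ` X))"
      by (intro surplus) auto
    moreover have "(\<Union>z\<in>X. S z - {y}) = \<Union>(S ` X) - {y}" by auto
    ultimately show ?thesis by (auto simp: card_Diff_singleton_if)
  qed simp
qed

lemma hall_condition_remove_tight:
  assumes "finite I" and fin: "\<forall>x\<in>I. finite (S x)"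
    and hall: "\<forall>X\<subseteq>I. card X \<le> card (\<Union>(S ` X))"
    and "T \<subseteq> I" and tight: "card (\<Union>(S ` T)) \<le> card T"
  shows "\<forall>Z \<subseteq> I - T. card Z \<le> card (\<Union>z\<in>Z. S z - \<Union>(S ` T))"
proof (intro allI impI)
  fix Z assume Z: "Z \<subseteq> I - T"
  have ZT: "Z \<union> T \<subseteq> I" using Z \<open>T \<subseteq> I\<close> by auto
  have "finite (\<Union>(S ` I))" using \<open>finite I\<close> fin by simp
  moreover have "\<Union>(S ` (Z \<union> T)) \<subseteq> \<Union>(S ` I)" "\<Union>(S ` T) \<subseteq> \<Union>(S ` I)"
    using ZT by auto
  ultimately have fin_ZT: "finite (\<Union>(S ` (Z \<union> T)))" and "finite (\<Union>(S ` T))"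
    by (auto intro: finite_subset)
  moreover have "finite Z" "finite T" using ZT \<open>finite I\<close> by (auto intro: finite_subset)
  ultimately have "card Z + card T = card (Z \<union> T)"
    using Z by (subst card_Un_disjoint) auto
  also have "\<dots> \<le> card (\<Union>(S ` (Z \<union> T)))" using hall ZT by blast
  also have "\<dots> = card (\<Union>(S ` (Z \<union> T)) - \<Union>(S ` T)) + card (\<Union>(S ` T))"
    using fin_ZT card_mono[OF fin_ZT, of "\<Union>(S ` T)"]
    by (subst card_Diff_subset) (auto intro: finite_subset)
  also have "\<dots> = card (\<Union>z\<in>Z. S z - \<Union>(S ` T)) + card (\<Union>(S ` T))"
    by (rule arg_cong[where f = "\<lambda>A. card A + _"]) auto
  finally show "card Z \<le> card (\<Union>z\<in>Z. S z - \<Union>(S ` T))" using tight by linarith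
qed

theorem hall_marriage:
  assumes "finite I" "\<forall>x\<in>I. finite (S x)" "\<forall>X\<subseteq>I. card X \<le> card (\<Union>(S ` X))"
  shows "\<exists>f. inj_on f I \<and> (\<forall>x\<in>I. f x \<in> S x)"
  using assms
proof (induction "card I" arbitrary: I S rule: less_induct)
  case less
  (* Either every proper nonempty X has surplus, and any x can be matched to any y \<in> S x, or
     some proper T is tight; then a matching of T uses up \<Union>(S ` T), and I - T is matched
     avoiding it. *)
  show ?case
  proof (cases "\<forall>X. X \<subseteq> I \<and> X \<noteq> {} \<and> X \<noteq> I \<longrightarrow> card X < card (\<Union>(S ` X))")
    case surplus: True
    show ?thesis
    proof (cases "I = {}")
      case False
      then obtain x where x: "x \<in> I" by blast
      then have "card {x} \<le> card (\<Union>(S ` {x}))" using less.prems(3) by (meson empty_subsetI insert_subset)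
      then have "S x \<noteq> {}" by auto
      then obtain y where y: "y \<in> S x" by blast
      have "card (I - {x}) < card I" using less.prems(1) x by (rule card_Diff1_less)
      moreover have "\<forall>X \<subseteq> I - {x}. card X \<le> card (\<Union>z\<in>X. S z - {y})"
        by (rule hall_condition_remove_element[of I S x y]) (use surplus x in auto)
      moreover have "\<forall>z\<in>I - {x}. finite (S z - {y})" using less.prems(2) by blast
      ultimately obtain f where f: "inj_on f (I - {x})" "\<forall>z\<in>I - {x}. f z \<in> S z - {y}"
        using less.hyps[of "I - {x}" "\<lambda>z. S z - {y}"] less.prems(1) by (meson finite_Diff)
      have "inj_on (f(x := y)) I"
        using f x by (auto simp: inj_on_def)
      moreover have "\<forall>z\<in>I. (f(x := y)) z \<in> S z" using f y by auto
      ultimately show ?thesis by blast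
    qed simp
  next
    case False
    then obtain T where T: "T \<subseteq> I" "T \<noteq> {}" "T \<noteq> I" and tight: "card (\<Union>(S ` T)) \<le> card T"
      using not_less by blast
    have "finite T" using T(1) less.prems(1) by (rule finite_subset)
    have "card T < card I" using T less.prems(1) by (meson psubsetI psubset_card_mono)
    moreover have "\<forall>X\<subseteq>T. card X \<le> card (\<Union>(S ` X))" using less.prems(3) T(1) by auto
    ultimately obtain f where f: "inj_on f T" "\<forall>z\<in>T. f z \<in> S z"
      using less.hyps[of T S] less.prems(2) T(1) \<open>finite T\<close> by (meson subsetD)
    have "0 < card T" "card T \<le> card I"
      using T \<open>finite T\<close> less.prems(1) by (auto intro: card_mono)
    then have "card (I - T) < card I"
      using T(1) \<open>finite T\<close> by (simp add: card_Diff_subset)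
    moreover have "\<forall>z\<in>I - T. finite (S z - \<Union>(S ` T))" using less.prems(2) by blast
    ultimately obtain g where g: "inj_on g (I - T)" "\<forall>z\<in>I - T. g z \<in> S z - \<Union>(S ` T)"
      using less.hyps[of "I - T" "\<lambda>z. S z - \<Union>(S ` T)"] less.prems(1)
        hall_condition_remove_tight[OF less.prems T(1) tight] by (meson finite_Diff)
    define h where "h x = (if x \<in> T then f x else g x)" for x
    have "f ` T \<inter> g ` (I - T) = {}" using f(2) g(2) by fastforce
    then have "inj_on h (T \<union> (I - T))"
      unfolding h_def by (rule inj_on_disjoint_Un[OF f(1) g(1)])
    moreover have "T \<union> (I - T) = I" using T(1) by blast
    moreover have "\<forall>x\<in>I. h x \<in> S x" using f(2) g(2) by (auto simp: h_def)
    ultimately show ?thesis by auto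
  qed
qed

lemma hall_marriage_deficiency:
  assumes "finite I" and fin: "\<forall>x\<in>I. finite (S x)"
    and hall: "\<forall>X\<subseteq>I. card X \<le> card (\<Union>(S ` X)) + d"
  shows "\<exists>J f. J \<subseteq> I \<and> card I \<le> card J + d \<and> inj_on f J \<and> (\<forall>x\<in>J. f x \<in> S x)"
proof -
  (* Pad every S x with the same d dummies Inr k and drop the points matched to dummies. *)
  define S' :: "_ \<Rightarrow> (_ + nat) set" where "S' x = Inl ` S x \<union> Inr ` {..<d}" for x
  have hall': "\<forall>X\<subseteq>I. card X \<le> card (\<Union>(S' ` X))"
  proof (intro allI impI)
    fix X assume X: "X \<subseteq> I"
    show "card X \<le> card (\<Union>(S' ` X))"
    proof (cases "X = {}")
      case False
      then have "\<Union>(S' ` X) = Inl ` \<Union>(S ` X) \<union> Inr ` {..<d}" by (auto simp: S'_def)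
      moreover have "finite (\<Union>(S ` X))"
        using X \<open>finite I\<close> fin by (auto intro: finite_subset)
      ultimately have "card (\<Union>(S' ` X)) = card (\<Union>(S ` X)) + d"
        by (simp only:) (subst card_Un_disjoint, auto simp: card_image)
      with hall X show ?thesis by auto
    qed simp
  qed
  have "\<forall>x\<in>I. finite (S' x)" using fin by (simp add: S'_def)
  then obtain f where f: "inj_on f I" "\<forall>x\<in>I. f x \<in> Inl ` S x \<union> Inr ` {..<d}"
    using hall_marriage[OF \<open>finite I\<close> _ hall'] unfolding S'_def by blast
  define J where "J = {x\<in>I. isl (f x)}"
  have "f ` (I - J) \<subseteq> Inr ` {..<d}" using f(2) unfolding J_def by auto
  from card_inj_on_le[OF inj_on_diff[OF f(1)] this] have "card (I - J) \<le> d"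
    by (simp add: card_image)
  moreover have "card I = card J + card (I - J)"
    using card_Int_Diff[OF \<open>finite I\<close>, of J] by (simp add: J_def Int_absorb1)
  moreover have "inj_on (\<lambda>x. projl (f x)) J"
    using f(1) by (auto simp: J_def inj_on_def intro: sum.expand)
  moreover have "\<forall>x\<in>J. projl (f x) \<in> S x"
    using f(2) by (auto simp: J_def)
  ultimately show ?thesis by (intro exI[of _ J]) (auto simp: J_def)
qed

lemma card_add_card_le_of_sparse_intervals:
  fixes X Y :: "nat set" and n s :: nat
  assumes "X \<subseteq> {1..n}" and "Y \<subseteq> {1..n}"
    and X_sparse: "\<forall>i\<in>X. \<forall>j. i < j \<longrightarrow> j \<le> n \<longrightarrow> 2 * card (Y \<inter> {i+1..j}) \<le> j - i + s"
    and Y_sparse: "\<forall>j\<in>Y. \<forall>i. 1 \<le> i \<longrightarrow> i < j \<longrightarrow> 2 * card (X \<inter> {i..j-1}) \<le> j - i + s"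
  shows "card X + card Y \<le> n + s + 1"
proof (cases "X = {} \<or> Y = {}")
  case True
  then show ?thesis using card_mono[OF _ assms(1)] card_mono[OF _ assms(2)] by auto
next
  case False
  have "finite X" "finite Y" using assms(1,2) by (auto intro: finite_subset)
  define i where "i = Min X"
  define j where "j = Max Y"
  have "i \<in> X" "j \<in> Y" using False \<open>finite X\<close> \<open>finite Y\<close> by (simp_all add: i_def j_def)
  have X_ge: "X \<subseteq> {i..n}" and Y_le: "Y \<subseteq> {1..j}"
    using assms(1,2) \<open>finite X\<close> \<open>finite Y\<close> by (auto simp: i_def j_def)
  show ?thesis
  proof (cases "i < j")
    case True
    have "card X \<le> card (X \<inter> {i..j-1}) + (n + 1 - j)"
    proof -
      have "card X \<le> card (X \<inter> {i..j-1} \<union> {j..n})"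
        using X_ge by (intro card_mono) auto
      also have "\<dots> \<le> card (X \<inter> {i..j-1}) + card {j..n}" by (rule card_Un_le)
      finally show ?thesis by simp
    qed
    moreover have "card Y \<le> i + card (Y \<inter> {i+1..j})"
    proof -
      have "card Y \<le> card ({1..i} \<union> Y \<inter> {i+1..j})"
        using Y_le by (intro card_mono) auto
      also have "\<dots> \<le> card {1..i} + card (Y \<inter> {i+1..j})" by (rule card_Un_le)
      finally show ?thesis by simp
    qed
    moreover have "2 * card (Y \<inter> {i+1..j}) \<le> j - i + s"
      using X_sparse \<open>i \<in> X\<close> True \<open>j \<in> Y\<close> assms(2) by auto
    moreover have "2 * card (X \<inter> {i..j-1}) \<le> j - i + s"
      using Y_sparse \<open>j \<in> Y\<close> True \<open>i \<in> X\<close> assms(1) by auto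
    ultimately show ?thesis using True \<open>j \<in> Y\<close> assms(2) by auto
  next
    case False
    then have "card X \<le> n + 1 - i" "card Y \<le> j"
      using card_mono[OF _ X_ge] card_mono[OF _ Y_le] by auto
    moreover have "i \<le> n" using \<open>i \<in> X\<close> assms(1) by auto
    ultimately show ?thesis using False by linarith
  qed
qed

lemma twice_card_le_of_many_neighbours:
  fixes N :: "'a set" and f :: "nat \<Rightarrow> 'a" and K Y :: "nat set" and s :: nat
  assumes "finite K" and "N \<inter> f ` K \<subseteq> f ` (K - Y)"
    and "real (card (N \<inter> f ` K)) \<ge> (real (card K) - real s) / 2"
  shows "2 * card (Y \<inter> K) \<le> card K + s"
proof -
  have "card (N \<inter> f ` K) \<le> card (K - Y)"
    using card_mono[OF _ assms(2)] card_image_le[of "K - Y" f] \<open>finite K\<close> by fastforce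
  moreover have "card K = card (K \<inter> Y) + card (K - Y)" using \<open>finite K\<close> by (rule card_Int_Diff)
  ultimately show ?thesis using assms(3) by (simp add: Int_commute)
qed

lemma card_le_card_neighbour_indices:
  fixes E :: "'v \<Rightarrow> 'v \<Rightarrow> bool" and a b :: "nat \<Rightarrow> 'v" and n s :: nat
  assumes sym: "\<forall>u v. E u v \<longrightarrow> E v u"
    and P1: "\<forall>i j. 1 \<le> i \<longrightarrow> i < j \<longrightarrow> j \<le> n \<longrightarrow>
               real (card (nbhd E (a i) \<inter> b ` {i+1..j})) \<ge> (real j - real i - real s) / 2"
    and P2: "\<forall>i j. 1 \<le> i \<longrightarrow> i < j \<longrightarrow> j \<le> n \<longrightarrow>
               real (card (nbhd E (b j) \<inter> a ` {i..j-1})) \<ge> (real j - real i - real s) / 2"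
    and X: "X \<subseteq> {1..n}"
  shows "card X \<le> card (\<Union>i\<in>X. {j\<in>{1..n}. E (a i) (b j)}) + (s + 1)"
proof -
  define N where "N = (\<Union>i\<in>X. {j\<in>{1..n}. E (a i) (b j)})"
  define Y where "Y = {1..n} - N"
  have "\<forall>i\<in>X. \<forall>j. i < j \<longrightarrow> j \<le> n \<longrightarrow> 2 * card (Y \<inter> {i+1..j}) \<le> j - i + s"
  proof (intro ballI allI impI)
    fix i j assume "i \<in> X" "i < j" "j \<le> n"
    have "nbhd E (a i) \<inter> b ` {i+1..j} \<subseteq> b ` ({i+1..j} - Y)"
      using \<open>i \<in> X\<close> \<open>j \<le> n\<close> X by (auto simp: nbhd_def Y_def N_def)
    moreover have "real (card (nbhd E (a i) \<inter> b ` {i+1..j})) \<ge> (real (card {i+1..j}) - real s) / 2"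
      using P1 \<open>i \<in> X\<close> \<open>i < j\<close> \<open>j \<le> n\<close> X by (auto simp: of_nat_diff)
    ultimately show "2 * card (Y \<inter> {i+1..j}) \<le> j - i + s"
      using twice_card_le_of_many_neighbours[of "{i+1..j}"] by simp
  qed
  moreover have "\<forall>j\<in>Y. \<forall>i. 1 \<le> i \<longrightarrow> i < j \<longrightarrow> 2 * card (X \<inter> {i..j-1}) \<le> j - i + s"
  proof (intro ballI allI impI)
    fix j i assume "j \<in> Y" "1 \<le> i" "i < j"
    have "nbhd E (b j) \<inter> a ` {i..j-1} \<subseteq> a ` ({i..j-1} - X)"
      using \<open>j \<in> Y\<close> \<open>1 \<le> i\<close> sym by (auto simp: nbhd_def Y_def N_def)
    moreover have "real (card (nbhd E (b j) \<inter> a ` {i..j-1})) \<ge> (real (card {i..j-1}) - real s) / 2"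
      using P2 \<open>j \<in> Y\<close> \<open>1 \<le> i\<close> \<open>i < j\<close> by (auto simp: Y_def of_nat_diff)
    ultimately show "2 * card (X \<inter> {i..j-1}) \<le> j - i + s"
      using twice_card_le_of_many_neighbours[of "{i..j-1}"] \<open>i < j\<close> by simp
  qed
  ultimately have "card X + card Y \<le> n + s + 1"
    using card_add_card_le_of_sparse_intervals[OF X] by (auto simp: Y_def)
  moreover have "N \<subseteq> {1..n}" by (auto simp: N_def)
  then have "card Y = n - card N" "card N \<le> n"
    using card_mono[of "{1..n}" N] by (auto simp: Y_def card_Diff_subset finite_subset)
  ultimately show ?thesis unfolding N_def by linarith
qed

lemma is_matching_image_pairs:
  assumes "finite J" "\<forall>i\<in>J. E (a i) (c i)"
    and "inj_on a J" "inj_on c J" "a ` J \<inter> c ` J = {}"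
  shows "is_matching E ((\<lambda>i. {a i, c i}) ` J)"
  unfolding is_matching_def
proof (intro conjI)
  show "finite ((\<lambda>i. {a i, c i}) ` J)" using \<open>finite J\<close> by simp
  show "(\<lambda>i. {a i, c i}) ` J \<subseteq> {{u, v} |u v. E u v}" using assms(2) by blast
  show "\<forall>e\<in>(\<lambda>i. {a i, c i}) ` J. \<forall>f\<in>(\<lambda>i. {a i, c i}) ` J. e \<noteq> f \<longrightarrow> e \<inter> f = {}"
  proof (intro ballI impI)
    fix e f assume "e \<in> (\<lambda>i. {a i, c i}) ` J" "f \<in> (\<lambda>i. {a i, c i}) ` J" "e \<noteq> f"
    then obtain i k where "i \<in> J" "k \<in> J" "i \<noteq> k" and ef: "e = {a i, c i}" "f = {a k, c k}"
      by blast
    then have "a i \<noteq> a k" "c i \<noteq> c k" "a i \<noteq> c k" "c i \<noteq> a k"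
      using assms(3-5) by (auto dest: inj_onD)
    then show "e \<inter> f = {}" unfolding ef by auto
  qed
qed

lemma card_image_pairs:
  assumes "inj_on a J" "a ` J \<inter> c ` J = {}"
  shows "card ((\<lambda>i. {a i, c i}) ` J) = card J"
proof (rule card_image, rule inj_onI)
  fix i k assume "i \<in> J" "k \<in> J" "{a i, c i} = {a k, c k}"
  with assms(2) have "a i = a k" by (metis disjoint_iff image_eqI insert_iff singletonD)
  with assms(1) show "i = k" using \<open>i \<in> J\<close> \<open>k \<in> J\<close> by (rule inj_onD)
qed

theorem claim3p2:
  fixes E :: "'v \<Rightarrow> 'v \<Rightarrow> bool" and a b :: "nat \<Rightarrow> 'v" and n s :: nat
  assumes sym: "\<forall>u v. E u v \<longrightarrow> E v u"
    and irrefl: "\<forall>u. \<not> E u u"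
    and inj_a: "inj_on a {1..n}" and inj_b: "inj_on b {1..n}"
    and disj: "a ` {1..n} \<inter> b ` {1..n} = {}"
    and bip: "\<forall>u v. E u v \<longrightarrow>
                (u \<in> a ` {1..n} \<and> v \<in> b ` {1..n}) \<or> (u \<in> b ` {1..n} \<and> v \<in> a ` {1..n})"
    and P1: "\<forall>i j. 1 \<le> i \<longrightarrow> i < j \<longrightarrow> j \<le> n \<longrightarrow>
               real (card (nbhd E (a i) \<inter> b ` {i+1..j})) \<ge> (real j - real i - real s) / 2"
    and P2: "\<forall>i j. 1 \<le> i \<longrightarrow> i < j \<longrightarrow> j \<le> n \<longrightarrow>
               real (card (nbhd E (b j) \<inter> a ` {i..j-1})) \<ge> (real j - real i - real s) / 2"
  shows "\<exists>M. is_matching E M \<and> int (card M) \<ge> int n - int s - 1"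
proof -
  define S where "S i = {j\<in>{1..n}. E (a i) (b j)}" for i
  have fin: "\<forall>i\<in>{1..n}. finite (S i)" by (simp add: S_def)
  have hall: "\<forall>X\<subseteq>{1..n}. card X \<le> card (\<Union>(S ` X)) + (s + 1)"
    using card_le_card_neighbour_indices[OF sym P1 P2] by (simp add: S_def)
  obtain J g where J: "J \<subseteq> {1..n}" "card {1..n} \<le> card J + (s + 1)"
      and g: "inj_on g J" "\<forall>i\<in>J. g i \<in> S i"
    using hall_marriage_deficiency[OF finite_atLeastAtMost fin hall] by blast
  have "g ` J \<subseteq> {1..n}" using g(2) by (auto simp: S_def)
  then have inj_bg: "inj_on (b \<circ> g) J"
    using g(1) inj_b by (auto intro: comp_inj_on inj_on_subset)
  have inj_aJ: "inj_on a J" using inj_a J(1) by (rule inj_on_subset)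
  have "a ` J \<subseteq> a ` {1..n}" "(b \<circ> g) ` J \<subseteq> b ` {1..n}"
    using J(1) \<open>g ` J \<subseteq> {1..n}\<close> by (auto simp flip: image_comp)
  then have disj_J: "a ` J \<inter> (b \<circ> g) ` J = {}" using disj by blast
  define M where "M = (\<lambda>i. {a i, (b \<circ> g) i}) ` J"
  have "is_matching E M"
    unfolding M_def
  proof (rule is_matching_image_pairs[OF _ _ inj_aJ inj_bg disj_J])
    show "finite J" using J(1) by (rule finite_subset) simp
    show "\<forall>i\<in>J. E (a i) ((b \<circ> g) i)" using g(2) by (simp add: S_def)
  qed
  moreover have "card M = card J"
    unfolding M_def by (rule card_image_pairs[OF inj_aJ disj_J])
  ultimately show ?thesis using J(2) by auto
qed

end
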